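(* Let $H$ be a $3$-uniform hypergraph and let $v,v'$ be distinct vertices of $H$. Suppose a path $wuw'$ of length $2$ is $(p,\epsilon)$-admissible in the graph $H_v\cap H_{v'}$. Then the $4$-cycle $vwv'w'$ is $(p,\epsilon)$-disk-coverable in $H$.
   Context: A $3$-uniform hypergraph is identified with the $2$-dimensional simplicial complex whose facets are its edges. The $1$-skeleton $\mathcal S(H)$ is the graph on $V(H)$ whose edges are the pairs $xy$ with $xyz\in E(H)$ for some $z$. The link graph $H_u$ of $u\in V(H)$ is the graph on $V(H)\setminus\{u\}$ with edges $vw$ for which $uvw\in E(H)$; $H_v\cap H_{v'}$ is the graph on the common vertex set whose edges are those in both links. A disk is a $3$-uniform hypergraph $D$ whose associated simplicial complex is homeomorphic to the closed $2$-dimensional disk; $\partial D$ is its boundary cycle in $\mathcal S(D)$ and $V^\circ(D)=V(D)\setminus V(\partial D)$. A disk with at least two edges is boundary-inducing if $\partial D$ is an induced subgraph of $\mathcal S(D)$. A cycle $C\subseteq\mathcal S(H)$ is $(p,\epsilon)$-disk-coverable if, choosing $U\subseteq V(H)$ by including each vertex independently with probability $p$, with probability at least $1-\epsilon$ there is a boundary-inducing disk $D\subseteq H$ with $\partial D=C$ and $V^\circ(D)\subseteq U$. For a graph $G$ and a path $wuw'$ of length $2$ in $G$: choose $U\subseteq V(G)\setminus\{u\}$ by including each vertex other than $u$ independently with probability $p$; the path $wuw'$ is $(p,\epsilon)$-admissible in $G$ if with probability at least $1-\epsilon$ the graph $G$ contains a path $ww_1\cdots w_{k-1}w'$ of length $k\ge2$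 from $w$ to $w'$ with $w_1,\ldots,w_{k-1}\in U$. *)

theory Defs
  imports "HOL-Analysis.Analysis"
begin

definition hypergraph3 :: "'a set \<Rightarrow> 'a set set \<Rightarrow> bool" where
  "hypergraph3 V E \<longleftrightarrow> finite V \<and> (\<forall>e\<in>E. e \<subseteq> V \<and> card e = 3)"

definition skeleton :: "'a set set \<Rightarrow> 'a set set" where
  "skeleton E = {{x, y} | x y. x \<noteq> y \<and> (\<exists>e\<in>E. {x, y} \<subseteq> e)}"

(* edge set of the link graph H_u (vertex set V(H) - {u}) *)
definition link_edges :: "'a set set \<Rightarrow> 'a \<Rightarrow> 'a set set" where
  "link_edges E u = {{x, y} | x y. x \<noteq> y \<and> {u, x, y} \<in> E}"

definition is_path :: "'a set \<Rightarrow> 'a set set \<Rightarrow> 'a list \<Rightarrow> bool" where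
  "is_path VG EG xs \<longleftrightarrow> xs \<noteq> [] \<and> distinct xs \<and> set xs \<subseteq> VG \<and>
     (\<forall>i. Suc i < length xs \<longrightarrow> {xs ! i, xs ! Suc i} \<in> EG)"

(* Probability that a random subset U of the finite set S, containing each element
   independently with probability p, satisfies P. *)
definition rand_subset_prob :: "'a set \<Rightarrow> real \<Rightarrow> ('a set \<Rightarrow> bool) \<Rightarrow> real" where
  "rand_subset_prob S p P =
     (\<Sum>U\<in>Pow S. if P U then p ^ card U * (1 - p) ^ card (S - U) else 0)"

definition admissible :: "'a set \<Rightarrow> 'a set set \<Rightarrow> real \<Rightarrow> real \<Rightarrow> 'a \<Rightarrow> 'a \<Rightarrow> 'a \<Rightarrow> bool" where
  "admissible VG EG p eps w u w' \<longleftrightarrow>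
     rand_subset_prob (VG - {u}) p
       (\<lambda>U. \<exists>xs. is_path VG EG xs \<and> length xs \<ge> 3 \<and> hd xs = w \<and> last xs = w' \<and>
               set (butlast (tl xs)) \<subseteq> U) \<ge> 1 - eps"

(* Geometric realisation of the simplicial complex with facets D, as a subspace of
   'a \<Rightarrow> real (product topology): union of the standard simplices on the facets. *)
definition geom_realisation :: "'a set set \<Rightarrow> ('a \<Rightarrow> real) set" where
  "geom_realisation D =
     (\<Union>e\<in>D. {x. (\<forall>i. 0 \<le> x i) \<and> (\<forall>i. i \<notin> e \<longrightarrow> x i = 0) \<and> sum x e = 1})"

definition is_disk :: "'a set set \<Rightarrow> bool" where
  "is_disk D \<longleftrightarrow> finite D \<and> (\<forall>e\<in>D. card e = 3) \<and>
     geom_realisation D homeomorphic cball (0 :: real^2) 1"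

definition boundary_edges :: "'a set set \<Rightarrow> 'a set set" where
  "boundary_edges D = {f \<in> skeleton D. card {e \<in> D. f \<subseteq> e} = 1}"

definition boundary_vertices :: "'a set set \<Rightarrow> 'a set" where
  "boundary_vertices D = \<Union>(boundary_edges D)"

definition interior_vertices :: "'a set set \<Rightarrow> 'a set" where
  "interior_vertices D = \<Union>D - boundary_vertices D"

definition boundary_inducing :: "'a set set \<Rightarrow> bool" where
  "boundary_inducing D \<longleftrightarrow> is_disk D \<and> card D \<ge> 2 \<and>
     (\<forall>f\<in>skeleton D. f \<subseteq> boundary_vertices D \<longrightarrow> f \<in> boundary_edges D)"

(* (p,eps)-disk-coverability of a cycle C (given by its edge set) in H = (V, E) *)
definition disk_coverable :: "'a set \<Rightarrow> 'a set set \<Rightarrow> real \<Rightarrow> real \<Rightarrow> 'a set set \<Rightarrow> bool" where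
  "disk_coverable V E p eps C \<longleftrightarrow>
     C \<subseteq> skeleton E \<and>
     rand_subset_prob V p
       (\<lambda>U. \<exists>D. D \<subseteq> E \<and> boundary_inducing D \<and> boundary_edges D = C \<and>
               interior_vertices D \<subseteq> U) \<ge> 1 - eps"

end

theory Submission
  imports Defs
begin

(*
  A path w = x_0 x_1 ... x_k = w' (k >= 2) in the common link of v and v' yields the triangles
  v x_i x_(i+1) and v' x_i x_(i+1) of H. Together they form the suspension of the path, which is
  a disk: placing v, v' at (0,1), (0,-1) and x_j at (j,0) flattens it homeomorphically onto a
  plane triangle. Its boundary is the 4-cycle v w v' w', which is induced because k >= 2, and its
  interior vertices are the inner vertices of the path. So a random set U carries such a disk as
  soon as its trace on V(G) - {u} contains the inner vertices of a w-w' path of G; that trace is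
  itself a p-random subset of V(G) - {u}, so the admissibility bound carries over.
*)

section \<open>Random subsets\<close>

lemma rand_subset_prob_mono:
  assumes "0 \<le> p" "p \<le> 1" "\<And>U. U \<subseteq> S \<Longrightarrow> Q U \<Longrightarrow> P U"
  shows "rand_subset_prob S p Q \<le> rand_subset_prob S p P"
  unfolding rand_subset_prob_def by (rule sum_mono) (use assms in auto)

lemma rand_subset_prob_insert_irrelevant:
  assumes fin: "finite W" and x: "x \<notin> W" and irrelevant: "\<And>U. R (insert x U) = R U"
  shows "rand_subset_prob (insert x W) p R = rand_subset_prob W p R"
proof -
  let ?t = "\<lambda>V U. if R U then p ^ card U * (1 - p) ^ card (V - U) else 0"
  have disj: "Pow W \<inter> insert x ` Pow W = {}" using x by auto
  have inj: "inj_on (insert x) (Pow W)"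
    using x by (intro inj_onI) (metis Pow_iff Diff_insert_absorb subset_iff)
  have "rand_subset_prob (insert x W) p R
      = sum (?t (insert x W)) (Pow W) + sum (?t (insert x W)) (insert x ` Pow W)"
    unfolding rand_subset_prob_def Pow_insert using fin disj by (simp add: sum.union_disjoint)
  also have "\<dots> = (\<Sum>U\<in>Pow W. ?t (insert x W) U + ?t (insert x W) (insert x U))"
    by (simp add: sum.reindex[OF inj] sum.distrib)
  also have "\<dots> = sum (?t W) (Pow W)"
  proof (rule sum.cong[OF refl])
    fix U assume U: "U \<in> Pow W"
    then have "finite U" "x \<notin> U" using fin x finite_subset by auto
    moreover have "insert x W - U = insert x (W - U)" "insert x W - insert x U = W - U"
      using U x by auto
    moreover have "card (insert x (W - U)) = Suc (card (W - U))" using fin x by simp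
    ultimately show "?t (insert x W) U + ?t (insert x W) (insert x U) = ?t W U"
      using fin irrelevant[of U] by (simp add: algebra_simps)
  qed
  finally show ?thesis unfolding rand_subset_prob_def .
qed

lemma rand_subset_prob_marginal:
  assumes "finite S" "finite T"
  shows "rand_subset_prob (S \<union> T) p (\<lambda>U. Q (U \<inter> S)) = rand_subset_prob S p Q"
  using assms(2)
proof (induction T rule: finite_induct)
  case empty
  show ?case unfolding rand_subset_prob_def by (rule sum.cong) (auto simp: Int_absorb2)
next
  case (insert x F)
  show ?case
  proof (cases "x \<in> S")
    case True
    then show ?thesis using insert.IH by (simp add: insert_absorb)
  next
    case False
    then have "rand_subset_prob (insert x (S \<union> F)) p (\<lambda>U. Q (U \<inter> S))
        = rand_subset_prob (S \<union> F) p (\<lambda>U. Q (U \<inter> S))"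
      using insert assms by (intro rand_subset_prob_insert_irrelevant) auto
    then show ?thesis using insert.IH by simp
  qed
qed

section \<open>The suspension of a path\<close>

lemma sum_lessThan_two_terms:
  fixes F :: "nat \<Rightarrow> 'b::comm_monoid_add"
  assumes "Suc i < n" and "\<And>j. j < n \<Longrightarrow> j \<noteq> i \<Longrightarrow> j \<noteq> Suc i \<Longrightarrow> F j = 0"
  shows "(\<Sum>j<n. F j) = F i + F (Suc i)"
proof -
  have "(\<Sum>j<n. F j) = (\<Sum>j\<in>{i, Suc i}. F j)"
    by (rule sum.mono_neutral_right) (use assms in auto)
  then show ?thesis by simp
qed

lemma not_boundary_edge_if_in_two_facets:
  assumes "finite D" "e \<in> D" "e' \<in> D" "e \<noteq> e'" "f \<subseteq> e" "f \<subseteq> e'"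
  shows "f \<notin> boundary_edges D"
proof
  assume "f \<in> boundary_edges D"
  then obtain x where "{e \<in> D. f \<subseteq> e} = {x}"
    by (auto simp: boundary_edges_def card_1_singleton_iff)
  then have "e = x" "e' = x" using assms by (auto simp: set_eq_iff)
  then show False using assms(4) by simp
qed

locale path_suspension =
  fixes xs :: "'a list" and k :: nat and north south :: 'a
  assumes distinct_xs: "distinct xs" and length_xs: "length xs = Suc k" and k_pos: "0 < k"
    and north_notin: "north \<notin> set xs" and south_notin: "south \<notin> set xs"
    and north_ne_south: "north \<noteq> south"
begin

definition facet :: "'a \<Rightarrow> nat \<Rightarrow> 'a set" where
  "facet d i = {d, xs ! i, xs ! Suc i}"

definition suspension :: "'a set set" where
  "suspension = facet north ` {..<k} \<union> facet south ` {..<k}"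

lemma nth_eq_iff [simp]: "i \<le> k \<Longrightarrow> j \<le> k \<Longrightarrow> xs ! i = xs ! j \<longleftrightarrow> i = j"
  using distinct_xs length_xs nth_eq_iff_index_eq by fastforce

lemma nth_ne_apex [simp]:
  assumes "i \<le> k"
  shows "xs ! i \<noteq> north" "xs ! i \<noteq> south" "north \<noteq> xs ! i" "south \<noteq> xs ! i"
  using assms north_notin south_notin length_xs nth_mem[of i xs] by fastforce+

lemma suspension_finite: "finite suspension"
  by (simp add: suspension_def)

lemma facet_in_suspension: "i < k \<Longrightarrow> d = north \<or> d = south \<Longrightarrow> facet d i \<in> suspension"
  by (auto simp: suspension_def)

lemma card_facet: "i < k \<Longrightarrow> d = north \<or> d = south \<Longrightarrow> card (facet d i) = 3"
  by (auto simp: facet_def)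

lemma facet_north_ne_south: "i < k \<Longrightarrow> facet north i \<noteq> facet south i"
  using north_ne_south by (auto simp: facet_def doubleton_eq_iff insert_eq_iff)

lemma card_suspension: "2 \<le> card suspension"
proof -
  have "{facet north 0, facet south 0} \<subseteq> suspension"
    using k_pos by (auto intro: facet_in_suspension)
  then have "card {facet north 0, facet south 0} \<le> card suspension"
    by (rule card_mono[OF suspension_finite])
  then show ?thesis using facet_north_ne_south[OF k_pos] by simp
qed

subsection \<open>A homeomorphism onto a triangle\<close>

text \<open>
  flatten is the linear extension of the placement north, south, xs ! j \<mapsto> (0,1), (0,-1), (j,0),
  and unflatten is its inverse, written with the tent functions of piecewise linear interpolation.
  piece_point i a s is the point with plane coordinates (a, s) in the two facets over [i, i+1].
\<close>

definition height :: "real^2 \<Rightarrow> real" where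
  "height q = 1 - \<bar>q$2\<bar>"

definition triangle :: "(real^2) set" where
  "triangle = {q. 0 \<le> q$1 \<and> q$1 \<le> real k * height q \<and> \<bar>q$2\<bar> \<le> 1}"

definition tent :: "nat \<Rightarrow> real^2 \<Rightarrow> real" where
  "tent j q = max 0 (height q - \<bar>q$1 - real j * height q\<bar>)"

definition unflatten :: "real^2 \<Rightarrow> 'a \<Rightarrow> real" where
  "unflatten q = (\<lambda>z. if z = north then max (q$2) 0 else if z = south then max (- q$2) 0
     else (\<Sum>j<length xs. if xs ! j = z then tent j q else 0))"

definition flatten :: "('a \<Rightarrow> real) \<Rightarrow> real^2" where
  "flatten y = (\<chi> i. if i = 1 then (\<Sum>j<length xs. real j * y (xs ! j)) else y north - y south)"

definition piece_point :: "nat \<Rightarrow> real \<Rightarrow> real \<Rightarrow> 'a \<Rightarrow> real" where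
  "piece_point i a s = (\<lambda>z. if z = north then max s 0 else if z = south then max (- s) 0
     else if z = xs ! i then real (Suc i) * (1 - \<bar>s\<bar>) - a
     else if z = xs ! Suc i then a - real i * (1 - \<bar>s\<bar>) else 0)"

lemma flatten_component:
  "flatten y$1 = (\<Sum>j<length xs. real j * y (xs ! j))" "flatten y$2 = y north - y south"
  by (simp_all add: flatten_def)

lemma unflatten_component: "m \<le> k \<Longrightarrow> unflatten q (xs ! m) = tent m q"
proof -
  assume m: "m \<le> k"
  have "(\<Sum>j<length xs. if xs ! j = xs ! m then tent j q else 0)
      = (\<Sum>j<length xs. if j = m then tent j q else 0)"
    by (rule sum.cong) (use m length_xs in auto)
  then show ?thesis using m length_xs by (simp add: unflatten_def)
qed

lemma unflatten_eq_piece_point: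
  assumes "q \<in> triangle" "i < k" "real i * height q \<le> q$1" "q$1 \<le> real (Suc i) * height q"
  shows "unflatten q = piece_point i (q$1) (q$2)"
proof
  fix z
  have h0: "0 \<le> height q" using assms(1) by (simp add: triangle_def height_def)
  show "unflatten q z = piece_point i (q$1) (q$2) z"
  proof (cases "z \<in> set xs")
    case False
    have "xs ! i \<in> set xs" "xs ! Suc i \<in> set xs" using assms(2) length_xs by auto
    with False show ?thesis using north_ne_south
      by (cases "z = north"; cases "z = south")
        (auto simp: piece_point_def unflatten_def intro!: sum.neutral)
  next
    case True
    then obtain m where m: "m \<le> k" "z = xs ! m" using length_xs by (auto simp: in_set_conv_nth)
    have "tent m q = piece_point i (q$1) (q$2) (xs ! m)"
    proof -
      consider "m = i" | "m = Suc i" | "Suc m \<le> i" | "Suc (Suc i) \<le> m" by linarith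
      then show ?thesis
      proof cases
        case 1 then show ?thesis using assms m
          by (simp add: tent_def piece_point_def height_def algebra_simps max_def)
      next
        case 2 then show ?thesis using assms m
          by (simp add: tent_def piece_point_def height_def algebra_simps max_def)
      next
        case 3
        have "real (Suc m) * height q \<le> real i * height q" using 3 h0 by (intro mult_right_mono) auto
        then have "tent m q = 0" using assms(3) by (simp add: tent_def algebra_simps)
        then show ?thesis using 3 m assms(2) by (simp add: piece_point_def)
      next
        case 4
        have "real (Suc (Suc i)) * height q \<le> real m * height q"
          using 4 h0 by (intro mult_right_mono) auto
        then have "tent m q = 0" using assms(4) by (simp add: tent_def algebra_simps)
        then show ?thesis using 4 m assms(2) by (simp add: piece_point_def)
      qed
    qed
    then show ?thesis using m unflatten_component by simp
  qed
qed

lemma triangle_pieces: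
  assumes "q \<in> triangle"
  obtains i where "i < k" "real i * height q \<le> q$1" "q$1 \<le> real (Suc i) * height q"
proof (cases "height q = 0")
  case True
  then show ?thesis using assms k_pos that[of 0] by (auto simp: triangle_def)
next
  case False
  then have h0: "0 < height q" using assms by (auto simp: triangle_def height_def)
  define t where "t = q$1 / height q"
  have t: "0 \<le> t" "t \<le> real k" using assms h0 by (auto simp: triangle_def t_def field_simps)
  obtain i where i: "i < k" "real i \<le> t" "t \<le> real (Suc i)"
  proof (cases "t < real k")
    case True
    then have "nat \<lfloor>t\<rfloor> < k" "real (nat \<lfloor>t\<rfloor>) \<le> t" "t \<le> real (Suc (nat \<lfloor>t\<rfloor>))"
      using t by linarith+
    then show ?thesis using that by blast
  next
    case False
    then show ?thesis using t k_pos that[of "k - 1"] by (auto simp: of_nat_diff)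
  qed
  have "q$1 = t * height q" using h0 by (simp add: t_def)
  then show ?thesis using i h0 that by (auto intro: mult_right_mono)
qed

lemma piece_point_in_realisation:
  assumes "i < k" "\<bar>s\<bar> \<le> 1" "real i * (1 - \<bar>s\<bar>) \<le> a" "a \<le> real (Suc i) * (1 - \<bar>s\<bar>)"
  shows "piece_point i a s \<in> geom_realisation suspension"
proof -
  define d where "d = (if 0 \<le> s then north else south)"
  have "facet d i \<in> suspension" using assms(1) by (auto simp: d_def intro: facet_in_suspension)
  moreover have "piece_point i a s \<in>
      {x. (\<forall>z. 0 \<le> x z) \<and> (\<forall>z. z \<notin> facet d i \<longrightarrow> x z = 0) \<and> sum x (facet d i) = 1}"
    using assms north_ne_south by (auto simp: d_def piece_point_def facet_def algebra_simps)
  ultimately show ?thesis unfolding geom_realisation_def by blast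
qed

lemma flatten_piece_point:
  assumes "i < k"
  shows "flatten (piece_point i a s) = (\<chi> j. if j = 1 then a else s)"
proof -
  have il: "Suc i < length xs" using assms length_xs by simp
  have "(\<Sum>j<length xs. real j * piece_point i a s (xs ! j))
      = real i * piece_point i a s (xs ! i) + real (Suc i) * piece_point i a s (xs ! Suc i)"
    by (rule sum_lessThan_two_terms[OF il]) (use assms length_xs in \<open>auto simp: piece_point_def\<close>)
  also have "\<dots> = a" using assms by (simp add: piece_point_def algebra_simps)
  finally show ?thesis
    using north_ne_south by (simp add: flatten_def piece_point_def vec_eq_iff max_def)
qed

lemma realisation_point_is_piece_point:
  assumes "y \<in> geom_realisation suspension"
  obtains i where "i < k" "y = piece_point i (flatten y$1) (flatten y$2)" "\<bar>flatten y$2\<bar> \<le> 1"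
    "real i * (1 - \<bar>flatten y$2\<bar>) \<le> flatten y$1"
    "flatten y$1 \<le> real (Suc i) * (1 - \<bar>flatten y$2\<bar>)"
proof -
  obtain e where e: "e \<in> suspension" and y0: "\<And>z. 0 \<le> y z" and yz: "\<And>z. z \<notin> e \<Longrightarrow> y z = 0"
    and ys: "sum y e = 1"
    using assms unfolding geom_realisation_def by blast
  obtain i d where i: "i < k" and d: "d = north \<or> d = south" and ed: "e = facet d i"
    using e unfolding suspension_def by blast
  define d' where "d' = (if d = north then south else north)"
  have il: "Suc i < length xs" using i length_xs by simp
  have yd': "y d' = 0" using i north_ne_south d by (intro yz) (auto simp: d'_def ed facet_def)
  have y1: "flatten y$1 = real i * y (xs ! i) + real (Suc i) * y (xs ! Suc i)"
    unfolding flatten_component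
    by (rule sum_lessThan_two_terms[OF il]) (use i d length_xs in \<open>auto intro!: yz simp: ed facet_def\<close>)
  have sum3: "y d + y (xs ! i) + y (xs ! Suc i) = 1"
    using ys i d north_ne_south by (auto simp: ed facet_def)
  have y2: "1 - \<bar>flatten y$2\<bar> = y (xs ! i) + y (xs ! Suc i)" "\<bar>flatten y$2\<bar> \<le> 1"
    using yd' d sum3 y0[of d] y0[of "xs ! i"] y0[of "xs ! Suc i"] north_ne_south
    by (auto simp: d'_def flatten_component)
  have "y = piece_point i (flatten y$1) (flatten y$2)"
  proof
    fix z
    show "y z = piece_point i (flatten y$1) (flatten y$2) z"
      unfolding piece_point_def y1 y2(1)
      using yd' d i y0[of d] yz[of z] north_ne_south
      by (auto simp: flatten_component(2) d'_def ed facet_def algebra_simps)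
  qed
  moreover have "real i * (1 - \<bar>flatten y$2\<bar>) \<le> flatten y$1"
    "flatten y$1 \<le> real (Suc i) * (1 - \<bar>flatten y$2\<bar>)"
    using y0 unfolding y1 y2(1) by (simp_all add: algebra_simps)
  ultimately show ?thesis using that i y2(2) by blast
qed

lemma unflatten_triangle:
  assumes "q \<in> triangle"
  shows "unflatten q \<in> geom_realisation suspension" "flatten (unflatten q) = q"
proof -
  obtain i where i: "i < k" "real i * height q \<le> q$1" "q$1 \<le> real (Suc i) * height q"
    using triangle_pieces[OF assms] .
  have q: "unflatten q = piece_point i (q$1) (q$2)"
    by (rule unflatten_eq_piece_point[OF assms i])
  show "unflatten q \<in> geom_realisation suspension"
    unfolding q using i assms by (intro piece_point_in_realisation) (auto simp: triangle_def height_def)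
  show "flatten (unflatten q) = q"
    unfolding q flatten_piece_point[OF i(1)] by (simp add: vec_eq_iff forall_2)
qed

lemma flatten_realisation:
  assumes "y \<in> geom_realisation suspension"
  shows "flatten y \<in> triangle" "unflatten (flatten y) = y"
proof -
  obtain i where i: "i < k" and y: "y = piece_point i (flatten y$1) (flatten y$2)"
    and b: "\<bar>flatten y$2\<bar> \<le> 1" "real i * (1 - \<bar>flatten y$2\<bar>) \<le> flatten y$1"
      "flatten y$1 \<le> real (Suc i) * (1 - \<bar>flatten y$2\<bar>)"
    using realisation_point_is_piece_point[OF assms] .
  have "real (Suc i) * (1 - \<bar>flatten y$2\<bar>) \<le> real k * (1 - \<bar>flatten y$2\<bar>)"
    using i b by (intro mult_right_mono) auto
  moreover have "0 \<le> real i * (1 - \<bar>flatten y$2\<bar>)" using b by simp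
  ultimately have "0 \<le> flatten y$1" "flatten y$1 \<le> real k * (1 - \<bar>flatten y$2\<bar>)"
    using b by linarith+
  then show T: "flatten y \<in> triangle" using b by (simp add: triangle_def height_def)
  have "unflatten (flatten y) = piece_point i (flatten y$1) (flatten y$2)"
    by (rule unflatten_eq_piece_point[OF T i]) (use b in \<open>auto simp: height_def\<close>)
  then show "unflatten (flatten y) = y" using y by simp
qed

lemma continuous_on_unflatten: "continuous_on S unflatten"
proof (rule continuous_on_coordinatewise_then_product)
  fix z
  have "continuous_on S (\<lambda>q. if xs ! j = z then tent j q else 0)" for j
    by (cases "xs ! j = z") (auto simp: tent_def height_def intro!: continuous_intros)
  then show "continuous_on S (\<lambda>q. unflatten q z)"
    unfolding unflatten_def
    by (cases "z = north"; cases "z = south") (auto intro!: continuous_intros continuous_on_sum)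
qed

lemma continuous_on_flatten: "continuous_on S flatten"
proof -
  have coord: "continuous_on S (\<lambda>y :: 'a \<Rightarrow> real. y a)" for a
    by (rule continuous_on_subset[OF continuous_on_product_coordinates]) simp
  have "continuous_on S (\<lambda>y. \<Sum>j<length xs. real j * y (xs ! j))"
    "continuous_on S (\<lambda>y. y north - y south)"
    by (intro continuous_on_sum continuous_on_mult_left continuous_on_diff coord)+
  then have "continuous_on S (\<lambda>y. if i = 1 then \<Sum>j<length xs. real j * y (xs ! j)
      else y north - y south)" for i :: 2
    by (cases "i = 1") simp_all
  then show ?thesis
    unfolding flatten_def by (rule continuous_on_vec_lambda)
qed

lemma convex_triangle: "convex triangle"
  unfolding convex_def
proof (intro ballI allI impI)
  fix x y :: "real^2" and u v :: real
  assume x: "x \<in> triangle" and y: "y \<in> triangle" and uv: "0 \<le> u" "0 \<le> v" "u + v = 1"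
  have x1: "0 \<le> x$1" "x$1 \<le> real k * (1 - \<bar>x$2\<bar>)" "\<bar>x$2\<bar> \<le> 1"
    using x by (auto simp: triangle_def height_def)
  have y1: "0 \<le> y$1" "y$1 \<le> real k * (1 - \<bar>y$2\<bar>)" "\<bar>y$2\<bar> \<le> 1"
    using y by (auto simp: triangle_def height_def)
  have abs2: "\<bar>u * x$2 + v * y$2\<bar> \<le> u * \<bar>x$2\<bar> + v * \<bar>y$2\<bar>"
    using uv by (metis abs_mult abs_of_nonneg abs_triangle_ineq)
  have "u * \<bar>x$2\<bar> \<le> u" "v * \<bar>y$2\<bar> \<le> v" using uv x1 y1 by (auto simp: mult_left_le)
  then have le1: "u * \<bar>x$2\<bar> + v * \<bar>y$2\<bar> \<le> 1" using uv by linarith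
  have "u * x$1 + v * y$1 \<le> u * (real k * (1 - \<bar>x$2\<bar>)) + v * (real k * (1 - \<bar>y$2\<bar>))"
    using uv x1 y1 by (intro add_mono mult_left_mono) auto
  also have "\<dots> = real k * ((u + v) - (u * \<bar>x$2\<bar> + v * \<bar>y$2\<bar>))"
    by (simp add: algebra_simps)
  also have "\<dots> \<le> real k * (1 - \<bar>u * x$2 + v * y$2\<bar>)"
    using abs2 uv by (intro mult_left_mono) auto
  finally show "u *\<^sub>R x + v *\<^sub>R y \<in> triangle"
    using uv x1 y1 abs2 le1 by (simp add: triangle_def height_def)
qed

lemma compact_triangle: "compact triangle"
  unfolding compact_eq_bounded_closed
proof
  show "bounded triangle"
    unfolding bounded_iff
  proof (intro exI ballI)
    fix q :: "real^2" assume q: "q \<in> triangle"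
    have "real k * (1 - \<bar>q$2\<bar>) \<le> real k * 1" by (rule mult_left_mono) auto
    then have "\<bar>q$1\<bar> \<le> real k" "\<bar>q$2\<bar> \<le> 1" using q by (auto simp: triangle_def height_def)
    then show "norm q \<le> real k + 1" using norm_le_l1_cart[of q] by (simp add: sum_2)
  qed
  show "closed triangle"
    unfolding triangle_def height_def
    by (intro closed_Collect_conj closed_Collect_le continuous_intros)
qed

lemma interior_triangle_nonempty: "interior triangle \<noteq> {}"
proof -
  define q0 :: "real^2" where "q0 = (\<chi> i. if i = 1 then 1/2 else 0)"
  have "ball q0 (1/8) \<subseteq> triangle"
  proof
    fix q assume "q \<in> ball q0 (1/8)"
    then have d: "norm (q - q0) < 1/8" by (simp add: dist_norm norm_minus_commute)
    have "\<bar>(q - q0)$1\<bar> < 1/8" "\<bar>(q - q0)$2\<bar> < 1/8"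
      using component_le_norm_cart[of "q - q0"] d by (meson le_less_trans)+
    then have q: "\<bar>q$1 - 1/2\<bar> < 1/8" "\<bar>q$2\<bar> < 1/8" by (auto simp: q0_def)
    have "1 * (1 - \<bar>q$2\<bar>) \<le> real k * (1 - \<bar>q$2\<bar>)"
      using k_pos q by (intro mult_right_mono) auto
    moreover have "0 \<le> q$1" "q$1 \<le> 1 - \<bar>q$2\<bar>" "\<bar>q$2\<bar> \<le> 1" using q by linarith+
    ultimately show "q \<in> triangle" unfolding triangle_def height_def by simp
  qed
  then have "q0 \<in> interior triangle" by (meson mem_interior zero_less_divide_1_iff zero_less_numeral)
  then show ?thesis by auto
qed

lemma suspension_homeomorphic_disk: "geom_realisation suspension homeomorphic cball (0::real^2) 1"
proof -
  have "homeomorphism triangle (geom_realisation suspension) unflatten flatten"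
    unfolding homeomorphism_def
    using unflatten_triangle flatten_realisation
    by (auto intro!: continuous_on_flatten continuous_on_unflatten image_eqI)
  then have "triangle homeomorphic geom_realisation suspension"
    unfolding homeomorphic_def by blast
  moreover have "triangle homeomorphic cball (0::real^2) 1"
    by (rule homeomorphic_convex_compact_cball
        [OF convex_triangle compact_triangle interior_triangle_nonempty]) simp
  ultimately show ?thesis by (meson homeomorphic_sym homeomorphic_trans)
qed

lemma suspension_is_disk: "is_disk suspension"
  unfolding is_disk_def using suspension_finite suspension_homeomorphic_disk
  by (auto simp: suspension_def card_facet)

lemma skeleton_suspensionE:
  assumes "f \<in> skeleton suspension"
  obtains (spoke) d j where "d = north \<or> d = south" "j \<le> k" "f = {d, xs ! j}"
    | (rung) m where "m < k" "f = {xs ! m, xs ! Suc m}"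
proof -
  obtain a b e where f: "f = {a, b}" "a \<noteq> b" "e \<in> suspension" "{a, b} \<subseteq> e"
    using assms unfolding skeleton_def by blast
  obtain m d where m: "m < k" "d = north \<or> d = south" "e = facet d m"
    using f(3) unfolding suspension_def by blast
  have "a \<in> {d, xs ! m, xs ! Suc m}" "b \<in> {d, xs ! m, xs ! Suc m}"
    using f m by (auto simp: facet_def)
  then consider "a = d" "b = xs ! m \<or> b = xs ! Suc m" | "b = d" "a = xs ! m \<or> a = xs ! Suc m"
    | "f = {xs ! m, xs ! Suc m}"
    using f(1,2) by auto
  then show ?thesis
  proof cases
    case 1 then show ?thesis using spoke[of d m] spoke[of d "Suc m"] f(1) m by auto
  next
    case 2 then show ?thesis using spoke[of d m] spoke[of d "Suc m"] f(1) m by (auto simp: insert_commute)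
  next
    case 3 then show ?thesis using rung m(1) by blast
  qed
qed

lemma facets_containing_end_spoke:
  assumes "j = 0 \<or> j = k" "d = north \<or> d = south"
  shows "{e \<in> suspension. {d, xs ! j} \<subseteq> e} = {facet d (if j = 0 then 0 else k - 1)}"
proof (intro equalityI subsetI)
  fix e assume e: "e \<in> {e \<in> suspension. {d, xs ! j} \<subseteq> e}"
  then obtain m d' where m: "m < k" "d' = north \<or> d' = south" "e = facet d' m"
    unfolding suspension_def by blast
  have "d \<in> {d', xs ! m, xs ! Suc m}" "xs ! j \<in> {d', xs ! m, xs ! Suc m}"
    using e m by (auto simp: facet_def)
  then have "d = d'" "j = m \<or> j = Suc m" using m assms north_ne_south by auto
  then show "e \<in> {facet d (if j = 0 then 0 else k - 1)}" using m assms by auto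
next
  fix e assume "e \<in> {facet d (if j = 0 then 0 else k - 1)}"
  moreover have "facet d (if j = 0 then 0 else k - 1) \<in> suspension"
    using assms k_pos by (intro facet_in_suspension) auto
  moreover have "{d, xs ! j} \<subseteq> facet d (if j = 0 then 0 else k - 1)"
    using assms k_pos by (auto simp: facet_def)
  ultimately show "e \<in> {e \<in> suspension. {d, xs ! j} \<subseteq> e}" by simp
qed

lemma end_spoke_boundary_edge:
  assumes "j = 0 \<or> j = k" "d = north \<or> d = south"
  shows "{d, xs ! j} \<in> boundary_edges suspension"
proof -
  have "{d, xs ! j} \<subseteq> facet d (if j = 0 then 0 else k - 1)"
    using assms k_pos by (auto simp: facet_def)
  moreover have "facet d (if j = 0 then 0 else k - 1) \<in> suspension"
    using assms k_pos by (auto intro: facet_in_suspension)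
  moreover have "d \<noteq> xs ! j" using assms by auto
  ultimately have "{d, xs ! j} \<in> skeleton suspension" unfolding skeleton_def by blast
  then show ?thesis
    unfolding boundary_edges_def using facets_containing_end_spoke[OF assms] by simp
qed

lemma boundary_edges_suspension:
  "boundary_edges suspension = {{north, xs ! 0}, {north, xs ! k}, {south, xs ! 0}, {south, xs ! k}}"
proof (intro equalityI subsetI)
  fix f assume f: "f \<in> boundary_edges suspension"
  then have "f \<in> skeleton suspension" by (simp add: boundary_edges_def)
  then show "f \<in> {{north, xs ! 0}, {north, xs ! k}, {south, xs ! 0}, {south, xs ! k}}"
  proof (cases rule: skeleton_suspensionE)
    case (spoke d j)
    show ?thesis
    proof (rule ccontr)
      assume "f \<notin> {{north, xs ! 0}, {north, xs ! k}, {south, xs ! 0}, {south, xs ! k}}"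
      then have j: "0 < j" "j < k" using spoke by auto
      have "xs ! (j - 1) \<in> facet d (j - 1)" "xs ! (j - 1) \<notin> facet d j"
        using j spoke(1) by (auto simp: facet_def)
      then have "facet d (j - 1) \<noteq> facet d j" by blast
      moreover have "facet d (j - 1) \<in> suspension" "facet d j \<in> suspension"
        using j spoke(1) by (auto intro: facet_in_suspension)
      moreover have "f \<subseteq> facet d (j - 1)" "f \<subseteq> facet d j"
        using j spoke by (auto simp: facet_def)
      ultimately have "f \<notin> boundary_edges suspension"
        by (intro not_boundary_edge_if_in_two_facets[OF suspension_finite])
      then show False using f by simp
    qed
  next
    case (rung m)
    have "facet north m \<in> suspension" "facet south m \<in> suspension"
      using rung(1) by (auto intro: facet_in_suspension)
    moreover have "f \<subseteq> facet north m" "f \<subseteq> facet south m"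
      using rung(2) by (auto simp: facet_def)
    moreover have "facet north m \<noteq> facet south m" using facet_north_ne_south rung(1) .
    ultimately have "f \<notin> boundary_edges suspension"
      by (intro not_boundary_edge_if_in_two_facets[OF suspension_finite])
    then show ?thesis using f by simp
  qed
qed (use end_spoke_boundary_edge in blast)

lemma boundary_vertices_suspension: "boundary_vertices suspension = {north, south, xs ! 0, xs ! k}"
  unfolding boundary_vertices_def boundary_edges_suspension by auto

lemma interior_vertices_suspension: "interior_vertices suspension \<subseteq> set (butlast (tl xs))"
proof
  fix z assume z: "z \<in> interior_vertices suspension"
  then obtain e where e: "e \<in> suspension" "z \<in> e" unfolding interior_vertices_def by auto
  have zb: "z \<notin> {north, south, xs ! 0, xs ! k}"
    using z unfolding interior_vertices_def boundary_vertices_suspension by auto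
  obtain m d where m: "m < k" "d = north \<or> d = south" "e = facet d m"
    using e unfolding suspension_def by blast
  then obtain j where j: "j \<le> k" "z = xs ! j" using e zb by (auto simp: facet_def)
  then have "0 < j" "j < k" using zb by (auto simp: le_less)
  then have "butlast (tl xs) ! (j - 1) = z" "j - 1 < length (butlast (tl xs))"
    using j length_xs by (simp_all add: nth_butlast nth_tl)
  then show "z \<in> set (butlast (tl xs))" by (metis nth_mem)
qed

lemma suspension_boundary_inducing:
  assumes "1 < k"
  shows "boundary_inducing suspension"
  unfolding boundary_inducing_def
proof (intro conjI ballI impI suspension_is_disk card_suspension)
  fix f assume fs: "f \<in> skeleton suspension" and fb: "f \<subseteq> boundary_vertices suspension"
  from fs show "f \<in> boundary_edges suspension"
  proof (cases rule: skeleton_suspensionE)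
    case (spoke d j)
    then have "j = 0 \<or> j = k" using fb unfolding boundary_vertices_suspension by auto
    then show ?thesis unfolding boundary_edges_suspension using spoke by auto
  next
    case (rung m)
    then show ?thesis using fb assms unfolding boundary_vertices_suspension by auto
  qed
qed

end

section \<open>Disks from paths in a common link\<close>

lemma link_edgesD: "{a, b} \<in> link_edges E d \<Longrightarrow> {d, a, b} \<in> E"
  unfolding link_edges_def by (auto simp: doubleton_eq_iff insert_commute)

lemma boundary_edges_subset_skeleton: "D \<subseteq> E \<Longrightarrow> boundary_edges D \<subseteq> skeleton E"
  unfolding boundary_edges_def skeleton_def by blast

lemma common_link_path_disk:
  assumes path: "is_path VG (link_edges E v \<inter> link_edges E v') xs" and len: "3 \<le> length xs"
    and ends: "hd xs = w" "last xs = w'" and inner: "set (butlast (tl xs)) \<subseteq> U"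
    and apexes: "v \<notin> VG" "v' \<notin> VG" "v \<noteq> v'"
  shows "\<exists>D. D \<subseteq> E \<and> boundary_inducing D \<and>
    boundary_edges D = {{v, w}, {w, v'}, {v', w'}, {w', v}} \<and> interior_vertices D \<subseteq> U"
proof -
  have "distinct xs" "set xs \<subseteq> VG"
    and rungs: "\<And>i. Suc i < length xs \<Longrightarrow> {xs ! i, xs ! Suc i} \<in> link_edges E v \<inter> link_edges E v'"
    using path by (auto simp: is_path_def)
  obtain k where k: "length xs = Suc k" "1 < k"
    using len by (cases "length xs") auto
  interpret path_suspension xs k v v'
    using \<open>distinct xs\<close> \<open>set xs \<subseteq> VG\<close> k apexes by unfold_locales auto
  have "xs \<noteq> []" using len by auto
  then have "xs ! 0 = w" "xs ! k = w'"
    using k ends by (simp_all add: hd_conv_nth last_conv_nth)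
  then have "boundary_edges suspension = {{v, w}, {w, v'}, {v', w'}, {w', v}}"
    unfolding boundary_edges_suspension by (auto simp: insert_commute)
  moreover have "suspension \<subseteq> E"
    using rungs k by (auto simp: suspension_def facet_def dest: link_edgesD)
  ultimately show ?thesis
    using suspension_boundary_inducing[OF k(2)] interior_vertices_suspension inner by blast
qed

theorem proposition3p3:
  fixes V :: "'a set" and E :: "'a set set" and v v' w u w' :: 'a and p eps :: real
  assumes "hypergraph3 V E"
    and "v \<in> V" and "v' \<in> V" and "v \<noteq> v'"
    and "0 \<le> p" and "p \<le> 1"
    and "is_path ((V - {v}) \<inter> (V - {v'})) (link_edges E v \<inter> link_edges E v') [w, u, w']"
    and "admissible ((V - {v}) \<inter> (V - {v'})) (link_edges E v \<inter> link_edges E v') p eps w u w'"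
  shows "disk_coverable V E p eps {{v, w}, {w, v'}, {v', w'}, {w', v}}"
proof -
  define VG where "VG = (V - {v}) \<inter> (V - {v'})"
  define C where "C = {{v, w}, {w, v'}, {v', w'}, {w', v}}"
  define has_path where "has_path = (\<lambda>U. \<exists>xs. is_path VG (link_edges E v \<inter> link_edges E v') xs \<and>
    length xs \<ge> 3 \<and> hd xs = w \<and> last xs = w' \<and> set (butlast (tl xs)) \<subseteq> U)"
  define has_disk where "has_disk = (\<lambda>U. \<exists>D. D \<subseteq> E \<and> boundary_inducing D \<and>
    boundary_edges D = C \<and> interior_vertices D \<subseteq> U)"
  have apexes: "v \<notin> VG" "v' \<notin> VG" "v \<noteq> v'" using assms(4) by (auto simp: VG_def)
  obtain D0 where "D0 \<subseteq> E" "boundary_edges D0 = C"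
    using common_link_path_disk[OF assms(7)[folded VG_def] _ refl refl subset_UNIV apexes]
    by (auto simp: C_def)
  then have "C \<subseteq> skeleton E" using boundary_edges_subset_skeleton by blast
  have disk_of_path: "has_path (U \<inter> (VG - {u})) \<Longrightarrow> has_disk U" for U
    unfolding has_path_def has_disk_def C_def using common_link_path_disk[OF _ _ _ _ _ apexes]
    by (meson le_inf_iff)
  have "1 - eps \<le> rand_subset_prob (VG - {u}) p has_path"
    using assms(8) by (simp add: admissible_def has_path_def VG_def)
  also have "\<dots> = rand_subset_prob ((VG - {u}) \<union> V) p (\<lambda>U. has_path (U \<inter> (VG - {u})))"
    using assms(1) by (intro rand_subset_prob_marginal[symmetric]) (auto simp: VG_def hypergraph3_def)
  also have "(VG - {u}) \<union> V = V" by (auto simp: VG_def)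
  also have "rand_subset_prob V p (\<lambda>U. has_path (U \<inter> (VG - {u}))) \<le> rand_subset_prob V p has_disk"
    using assms(5,6) disk_of_path by (intro rand_subset_prob_mono)
  finally show ?thesis
    using \<open>C \<subseteq> skeleton E\<close> by (simp add: disk_coverable_def has_disk_def C_def)
qed

end
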